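(* For every integer $k\ge2$, $\displaystyle\lim_{n\to\infty}\chi''_c(G_{k,n})=k+1$.
   Context: A half-edge has exactly one end vertex. Let $H_k$ be obtained from $K_{k,k}$ by deleting one vertex but keeping its $k$ incident edges as half-edges, and let $H'_k$ be obtained from $H_k$ by deleting $k-2$ of its half-edges. For $n\ge1$ let $B_1,\ldots,B_n$ be copies of $H'_k$ with half-edges $f_i,f'_i$ in $B_i$, and let $B_0$ be a single vertex $u$ with two half-edges $f_0,f'_{n+1}$. $G_{k,n}$ is obtained from the disjoint union of $B_0,\ldots,B_n$ by joining $f_i$ and $f'_{i+1}$ into an edge for each $0\le i\le n$. For integers $p\ge q\ge1$, a $(p,q)$-total colouring of a graph assigns colours in $\{0,\ldots,p-1\}$ to vertices and edges such that $q\le|c(a)-c(b)|\le p-q$ whenever $a,b$ are adjacent vertices, edges sharing an end, or an incident vertex–edge pair; $\chi''_c(G)=\inf\{p/q\mid G \text{ has a } (p,q)\text{-total colouring}\}$. *)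

theory Defs
  imports Complex_Main
begin

text \<open>A simple graph is given by a vertex set V and an edge set E of two-element
subsets of V. Elements of the graph (vertices and edges) are represented as
Inl v (vertex) and Inr e (edge).\<close>

fun total_adj :: "'v set set \<Rightarrow> ('v + 'v set) \<Rightarrow> ('v + 'v set) \<Rightarrow> bool" where
  "total_adj E (Inl a) (Inl b) = (a \<noteq> b \<and> {a, b} \<in> E)"
| "total_adj E (Inr e) (Inr f) = (e \<noteq> f \<and> e \<inter> f \<noteq> {})"
| "total_adj E (Inl a) (Inr e) = (a \<in> e)"
| "total_adj E (Inr e) (Inl a) = (a \<in> e)"

definition total_elems :: "'v set \<Rightarrow> 'v set set \<Rightarrow> ('v + 'v set) set" where
  "total_elems V E = Inl ` V \<union> Inr ` E"

definition pq_total_colouring ::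
  "'v set \<Rightarrow> 'v set set \<Rightarrow> nat \<Rightarrow> nat \<Rightarrow> (('v + 'v set) \<Rightarrow> nat) \<Rightarrow> bool" where
  "pq_total_colouring V E p q c \<longleftrightarrow>
     (\<forall>x \<in> total_elems V E. c x < p) \<and>
     (\<forall>x \<in> total_elems V E. \<forall>y \<in> total_elems V E. total_adj E x y \<longrightarrow>
        int q \<le> \<bar>int (c x) - int (c y)\<bar> \<and> \<bar>int (c x) - int (c y)\<bar> \<le> int p - int q)"

definition circular_total_chromatic_number :: "'v set \<Rightarrow> 'v set set \<Rightarrow> real" where
  "circular_total_chromatic_number V E =
     Inf {real p / real q | p q. 1 \<le> q \<and> q \<le> p \<and> (\<exists>c. pq_total_colouring V E p q c)}"

text \<open>Vertices: U is the vertex u of B_0; Av i j (1 \<le> i \<le> n, 1 \<le> j \<le> k) are the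
k vertices of the surviving side of K_{k,k} in block B_i; Bv i l (1 \<le> l \<le> k-1)
are the k-1 remaining vertices of the other side. In H'_k the two kept half-edges
are f_i at Av i 1 and f'_i at Av i 2 (all vertices of that side are symmetric).
Joining f_i with f'_{i+1} gives the edges u--Av 1 2, Av i 1--Av (i+1) 2 (1 \<le> i < n),
and Av n 1--u.\<close>

datatype gvert = U | Av nat nat | Bv nat nat

definition G_V :: "nat \<Rightarrow> nat \<Rightarrow> gvert set" where
  "G_V k n = {U} \<union> {Av i j | i j. 1 \<le> i \<and> i \<le> n \<and> 1 \<le> j \<and> j \<le> k}
                 \<union> {Bv i l | i l. 1 \<le> i \<and> i \<le> n \<and> 1 \<le> l \<and> l \<le> k - 1}"

definition G_E :: "nat \<Rightarrow> nat \<Rightarrow> gvert set set" where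
  "G_E k n = {{Av i j, Bv i l} | i j l. 1 \<le> i \<and> i \<le> n \<and> 1 \<le> j \<and> j \<le> k \<and> 1 \<le> l \<and> l \<le> k - 1}
           \<union> {{U, Av 1 2}}
           \<union> {{Av i 1, Av (i + 1) 2} | i. 1 \<le> i \<and> i < n}
           \<union> {{Av n 1, U}}"

end

theory Submission
  imports Defs
begin

text \<open>A vertex Bv i l and its k incident edges are pairwise adjacent in the total graph, so
every (p,q)-total colouring has p \<ge> (k+1)q. Conversely, when n \<ge> 2q+1 there is a ((k+1)q+1, q)-total colouring: block i
uses the k+1 colours q a (0 \<le> a \<le> k) shifted by a level that rises by one from block to block
until it reaches 2q+1, and this accumulated shift is exactly what closes the cycle at u.
Hence k+1 \<le> \<chi>''_c(G_{k,n}) \<le> k+1+1/q for q = (n-1) div 2.\<close>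

section \<open>Separation on the colour circle\<close>

definition circ_sep :: "int \<Rightarrow> int \<Rightarrow> int \<Rightarrow> int \<Rightarrow> bool" where
  "circ_sep P Q a b \<longleftrightarrow> Q \<le> (a - b) mod P \<and> (a - b) mod P \<le> P - Q"

lemma circ_sep_intro:
  assumes "0 < Q" "Q \<le> d" "d \<le> P - Q" "a - b = d + m * P"
  shows "circ_sep P Q a b"
proof -
  have "(a - b) mod P = d mod P" using assms(4) by simp
  also have "\<dots> = d" using assms by (intro mod_pos_pos_trivial) auto
  finally show ?thesis using assms unfolding circ_sep_def by simp
qed

lemma circ_sep_commute:
  assumes "0 < Q" "circ_sep P Q a b"
  shows "circ_sep P Q b a"
proof -
  define d where "d = (a - b) mod P"
  have d: "Q \<le> d" "d \<le> P - Q" using assms unfolding circ_sep_def d_def by auto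
  have "b - a = (P - d) + (- ((a - b) div P) - 1) * P"
    unfolding d_def by (simp add: algebra_simps minus_mod_eq_mult_div)
  then show ?thesis using d assms by (intro circ_sep_intro[where d = "P - d"]) auto
qed

lemma circ_sep_mod_distance:
  assumes "0 < Q" "circ_sep P Q a b"
  shows "Q \<le> \<bar>a mod P - b mod P\<bar> \<and> \<bar>a mod P - b mod P\<bar> \<le> P - Q"
proof -
  have P: "0 < P" using assms unfolding circ_sep_def by linarith
  define w where "w = a mod P - b mod P"
  have r: "(a - b) mod P = w mod P" unfolding w_def by (simp add: mod_diff_eq)
  have w: "- P < w" "w < P" unfolding w_def using P pos_mod_bound pos_mod_sign by (smt (verit))+
  have "w mod P = (if 0 \<le> w then w else w + P)"
  proof (cases "0 \<le> w")
    case False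
    have "w mod P = (w + P) mod P" by simp
    also have "\<dots> = w + P" using w False by (intro mod_pos_pos_trivial) auto
    finally show ?thesis using False by simp
  qed (use w in \<open>simp add: mod_pos_pos_trivial\<close>)
  then show ?thesis using assms r unfolding circ_sep_def w_def[symmetric] by (auto split: if_splits)
qed

text \<open>Colours of the form Q a + s with 0 \<le> a \<le> K are the K+1 slots of level s on a circle
of length (K+1)Q+1.\<close>

lemma circ_sep_slots:
  assumes "0 < Q" "P = (K + 1) * Q + 1" "0 \<le> a" "a \<le> K" "0 \<le> b" "b \<le> K" "a \<noteq> b"
  shows "circ_sep P Q (Q * a + s) (Q * b + s)"
proof -
  have bounds: "Q \<le> Q * (x - y)" "Q * (x - y) \<le> Q * K" if "y < x" "0 \<le> y" "x \<le> K" for x y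
    using that mult_left_mono[of 1 "x - y" Q] mult_left_mono[of "x - y" K Q] assms(1) by auto
  show ?thesis
  proof (cases "b < a")
    case True
    then show ?thesis using assms bounds[of b a]
      by (intro circ_sep_intro[where d = "Q * (a - b)" and m = 0]) (auto simp: algebra_simps)
  next
    case False
    then show ?thesis using assms bounds[of a b]
      by (intro circ_sep_intro[where d = "P - Q * (b - a)" and m = "-1"]) (auto simp: algebra_simps)
  qed
qed

lemma circ_sep_higher_slot:
  assumes "0 < Q" "P = (K + 1) * Q + 1" "0 \<le> b" "b < a" "a \<le> K" "0 \<le> t" "t \<le> 1"
  shows "circ_sep P Q (Q * a + s + t) (Q * b + s)"
proof (rule circ_sep_intro[where d = "Q * (a - b) + t" and m = 0])
  have "Q \<le> Q * (a - b)" using assms mult_left_mono[of 1 "a - b" Q] by auto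
  then show "Q \<le> Q * (a - b) + t" using assms by linarith
  have "Q * (a - b) \<le> Q * K" using assms by (intro mult_left_mono) auto
  moreover have "P = Q * K + Q + 1" using assms by (simp add: algebra_simps)
  ultimately show "Q * (a - b) + t \<le> P - Q" using assms by linarith
qed (use assms in \<open>simp_all add: algebra_simps\<close>)

lemma circ_sep_add_period: "circ_sep P Q (a + m * P) b \<longleftrightarrow> circ_sep P Q a b"
proof -
  have "(a + m * P - b) mod P = (a - b) mod P" by (metis add_diff_eq diff_add_eq mod_mult_self1)
  then show ?thesis unfolding circ_sep_def by simp
qed

lemma nat_mod_eq_imp_eq:
  fixes a b k :: nat
  assumes "a mod k = b mod k" "a < b + k" "b < a + k"
  shows "a = b"
proof -
  have *: "a = b" if "a \<le> b" "a mod k = b mod k" "b < a + k" for a b :: nat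
  proof -
    have "k dvd b - a" using that mod_eq_dvd_iff_nat by metis
    moreover have "b - a < k" using that by linarith
    ultimately show ?thesis using that by (metis dvd_imp_le le_antisym not_less zero_less_diff)
  qed
  show ?thesis using *[of a b] *[of b a] assms by linarith
qed

lemma cyclic_latin_square_distinct:
  fixes j l j' l' k :: nat
  assumes "1 \<le> j" "j \<le> k" "l < k" "1 \<le> j'" "j' \<le> k" "l' < k"
    and "j' = j \<or> l' = l" "(j', l') \<noteq> (j, l)"
  shows "(j' + l' - 1) mod k \<noteq> (j + l - 1) mod k"
proof
  assume eq: "(j' + l' - 1) mod k = (j + l - 1) mod k"
  have "j' + l' - 1 < j + l - 1 + k" "j + l - 1 < j' + l' - 1 + k" using assms by auto
  with eq have "j' + l' - 1 = j + l - 1" by (rule nat_mod_eq_imp_eq)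
  then show False using assms by auto
qed

lemma Min_add_card_le_Max:
  fixes S :: "nat set"
  assumes "finite S" "S \<noteq> {}" "\<And>x y. x \<in> S \<Longrightarrow> y \<in> S \<Longrightarrow> x < y \<Longrightarrow> x + q \<le> y"
  shows "Min S + (card S - 1) * q \<le> Max S"
  using assms
proof (induction "card S" arbitrary: S)
  case 0
  then show ?case by simp
next
  case (Suc m)
  show ?case
  proof (cases "m = 0")
    case True
    then obtain x where "S = {x}" using Suc.hyps(2) by (metis One_nat_def card_1_singletonE)
    then show ?thesis by simp
  next
    case False
    define S' where "S' = S - {Max S}"
    have MS: "Max S \<in> S" using Suc.prems(1,2) by (rule Max_in)
    have S': "finite S'" "card S' = m" "S' \<subseteq> S"
      using Suc.hyps(2) Suc.prems(1) MS unfolding S'_def by auto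
    then have "S' \<noteq> {}" using False by auto
    have "Min S' + (card S' - 1) * q \<le> Max S'"
      using S' \<open>S' \<noteq> {}\<close> Suc.prems(3) by (intro Suc.hyps(1)) auto
    moreover have "Min S \<le> Min S'" using Min_antimono S' \<open>S' \<noteq> {}\<close> Suc.prems(1) by blast
    moreover have "Max S' + q \<le> Max S"
    proof -
      have "Max S' \<in> S'" using S' \<open>S' \<noteq> {}\<close> by (intro Max_in)
      then have "Max S' \<in> S" "Max S' < Max S"
        using Suc.prems(1) unfolding S'_def by (auto simp: order.strict_iff_order)
      then show ?thesis using Suc.prems(3) MS by blast
    qed
    ultimately show ?thesis using S'(2) Suc.hyps(2)[symmetric] False by (cases m) auto
  qed
qed

lemma pq_total_colouring_clique_bound:
  assumes col: "pq_total_colouring V E p q c" and "1 \<le> q"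
    and C: "C \<subseteq> total_elems V E" "finite C" "2 \<le> card C"
    and adj: "\<And>x y. x \<in> C \<Longrightarrow> y \<in> C \<Longrightarrow> x \<noteq> y \<Longrightarrow> total_adj E x y"
  shows "card C * q \<le> p"
proof -
  have sep: "int q \<le> \<bar>int (c x) - int (c y)\<bar> \<and> \<bar>int (c x) - int (c y)\<bar> \<le> int p - int q"
    if "x \<in> C" "y \<in> C" "x \<noteq> y" for x y
    using col C(1) adj that unfolding pq_total_colouring_def by blast
  define S where "S = c ` C"
  have "inj_on c C" using sep \<open>1 \<le> q\<close> by (fastforce intro: inj_onI)
  then have card_S: "card S = card C" unfolding S_def by (simp add: card_image)
  have S: "finite S" "S \<noteq> {}" using C unfolding S_def by auto
  have "Min S + (card S - 1) * q \<le> Max S"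
    using sep by (intro Min_add_card_le_Max S) (fastforce simp: S_def)
  moreover obtain x y where "x \<in> C" "y \<in> C" "Max S = c x" "Min S = c y"
    using Max_in[OF S] Min_in[OF S] unfolding S_def by blast
  ultimately have "(card C - 1) * q + q \<le> p"
    using sep[of x y] C(3) card_S \<open>1 \<le> q\<close> by (cases "x = y") auto
  then show ?thesis using C(3) by (cases "card C") (auto simp: algebra_simps)
qed

lemma circular_total_chromatic_number_le:
  assumes "pq_total_colouring V E p q c" "1 \<le> q" "q \<le> p"
  shows "circular_total_chromatic_number V E \<le> real p / real q"
  unfolding circular_total_chromatic_number_def
proof (rule cInf_lower)
  show "bdd_below {real p / real q | p q. 1 \<le> q \<and> q \<le> p \<and> (\<exists>c. pq_total_colouring V E p q c)}"
    by (rule bdd_belowI[where m = 0]) auto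
qed (use assms in blast)

lemma circular_total_chromatic_number_ge:
  assumes "pq_total_colouring V E p0 q0 c0" "1 \<le> q0" "q0 \<le> p0"
    and "\<And>p q c. 1 \<le> q \<Longrightarrow> pq_total_colouring V E p q c \<Longrightarrow> r * real q \<le> real p"
  shows "r \<le> circular_total_chromatic_number V E"
  unfolding circular_total_chromatic_number_def
proof (rule cInf_greatest)
  fix x assume "x \<in> {real p / real q | p q. 1 \<le> q \<and> q \<le> p \<and> (\<exists>c. pq_total_colouring V E p q c)}"
  then obtain p q c where "x = real p / real q" "1 \<le> q" "pq_total_colouring V E p q c" by auto
  then show "r \<le> x" using assms(4) by (simp add: pos_le_divide_eq)
qed (use assms in blast)

lemma G_E_cases [consumes 1, case_names block first link last]:
  assumes "e \<in> G_E k n"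
  obtains (block) i j l where "e = {Av i j, Bv i l}" "1 \<le> i" "i \<le> n" "1 \<le> j" "j \<le> k" "1 \<le> l" "l < k"
  | (first) "e = {U, Av 1 2}"
  | (link) i where "e = {Av i 1, Av (Suc i) 2}" "1 \<le> i" "i < n"
  | (last) "e = {Av n 1, U}"
proof -
  from assms consider (b) i j l where "e = {Av i j, Bv i l}" "1 \<le> i" "i \<le> n" "1 \<le> j" "j \<le> k" "1 \<le> l" "l \<le> k - 1"
    | (f) "e = {U, Av 1 2}" | (c) i where "e = {Av i 1, Av (i + 1) 2}" "1 \<le> i" "i < n" | (l) "e = {Av n 1, U}"
    unfolding G_E_def by blast
  then show ?thesis using that by cases (auto simp del: One_nat_def simp: Suc_eq_plus1)
qed

lemma block_edge_in_G_E:
  assumes "1 \<le> i" "i \<le> n" "1 \<le> j" "j \<le> k" "1 \<le> l" "l < k"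
  shows "{Av i j, Bv i l} \<in> G_E k n"
proof -
  have "l \<le> k - 1" using assms by simp
  then show ?thesis unfolding G_E_def using assms by blast
qed

lemma G_clique_bound:
  assumes "2 \<le> k" "1 \<le> n" "1 \<le> q" "pq_total_colouring (G_V k n) (G_E k n) p q c"
  shows "(k + 1) * q \<le> p"
proof -
  define C where "C = insert (Inl (Bv 1 1)) ((\<lambda>j. Inr {Av 1 j, Bv 1 1}) ` {1..k})"
  have "inj_on (\<lambda>j. Inr {Av 1 j, Bv 1 1}) {1..k}"
    by (rule inj_onI) (simp add: doubleton_eq_iff)
  from card_image[OF this] have card_C: "card C = k + 1"
    unfolding C_def by (subst card_insert_disjoint) auto
  have "card C * q \<le> p"
  proof (rule pq_total_colouring_clique_bound[OF assms(4,3)])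
    show "C \<subseteq> total_elems (G_V k n) (G_E k n)"
      using assms(1,2) block_edge_in_G_E[of 1 n _ k 1] unfolding C_def total_elems_def G_V_def by auto
    show "total_adj (G_E k n) x y" if "x \<in> C" "y \<in> C" "x \<noteq> y" for x y
      using that unfolding C_def by (auto simp: doubleton_eq_iff)
  qed (use card_C assms(1) in \<open>auto simp: C_def\<close>)
  then show ?thesis using card_C by simp
qed

section \<open>A ((k+1)q+1, q)-total colouring of G_{k,n} for n \<ge> 2q+1\<close>

locale G_colouring =
  fixes k q n :: nat
  assumes k_ge_2: "2 \<le> k" and q_ge_1: "1 \<le> q" and n_ge: "2 * q + 1 \<le> n"
begin

definition P :: int where "P = int ((k + 1) * q + 1)"
abbreviation sep :: "int \<Rightarrow> int \<Rightarrow> bool" where "sep \<equiv> circ_sep P (int q)"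

definition level :: "nat \<Rightarrow> int" where "level i = int (min i (2 * q + 1))"

text \<open>In block i, the vertex Av i j sits in slot j-1, all vertices Bv i l in slot k, the edge
Av i j -- Bv i l in slot (j+l-1) mod k (a Latin square, so edges at a common vertex differ)
and every edge leaving the block towards the next one in slot k.\<close>

definition vertex_colour :: "gvert \<Rightarrow> int" where
  "vertex_colour v = (case v of
      U \<Rightarrow> 0
    | Av i j \<Rightarrow> int q * int (j - 1) + level i
    | Bv i l \<Rightarrow> int q * int k + level i)"

definition edge_colour :: "gvert set \<Rightarrow> int" where
  "edge_colour e =
    (if e = {U, Av 1 2} then int q * int k + level 1
     else if e = {Av n 1, U} then int q * int k + level n
     else if \<exists>i. e = {Av i 1, Av (Suc i) 2}
       then int q * int k + level (Suc (THE i. e = {Av i 1, Av (Suc i) 2}))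
     else (case THE (i, j, l). e = {Av i j, Bv i l} of
       (i, j, l) \<Rightarrow> int q * int ((j + l - 1) mod k) + level i))"

definition colour :: "gvert + gvert set \<Rightarrow> nat" where
  "colour x = nat ((case x of Inl v \<Rightarrow> vertex_colour v | Inr e \<Rightarrow> edge_colour e) mod P)"

lemma vertex_colour_simps [simp]:
  "vertex_colour U = 0"
  "vertex_colour (Av i j) = int q * int (j - 1) + level i"
  "vertex_colour (Bv i l) = int q * int k + level i"
  by (simp_all add: vertex_colour_def)

lemma edge_colour_first: "edge_colour {U, Av 1 2} = int q * int k + level 1"
  by (simp add: edge_colour_def)

lemma edge_colour_last: "edge_colour {Av n 1, U} = int q * int k + level n"
  by (simp add: edge_colour_def doubleton_eq_iff)

lemma edge_colour_link: "edge_colour {Av i 1, Av (Suc i) 2} = int q * int k + level (Suc i)"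
proof -
  have "(THE i'. {Av i 1, Av (Suc i) 2} = {Av i' 1, Av (Suc i') 2}) = i"
    by (rule the_equality) (auto simp: doubleton_eq_iff)
  then show ?thesis by (auto simp: edge_colour_def doubleton_eq_iff)
qed

lemma edge_colour_block:
  "edge_colour {Av i j, Bv i l} = int q * int ((j + l - 1) mod k) + level i"
proof -
  have "(THE (i', j', l'). {Av i j, Bv i l} = {Av i' j', Bv i' l'}) = (i, j, l)"
    by (rule the_equality) (auto simp: doubleton_eq_iff)
  then show ?thesis by (auto simp: edge_colour_def doubleton_eq_iff)
qed

lemma level_1 [simp]: "level 1 = 1" "level (Suc 0) = 1"
  using q_ge_1 by (simp_all add: level_def)

lemma level_n [simp]: "level n = 2 * int q + 1"
  using n_ge by (simp add: level_def)

lemma level_step: "0 \<le> level (Suc i) - level i" "level (Suc i) - level i \<le> 1"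
  by (auto simp: level_def)

lemma P_eq: "P = (int k + 1) * int q + 1"
  by (simp add: P_def algebra_simps)

lemma sep_commute: "sep a b \<Longrightarrow> sep b a"
  using circ_sep_commute q_ge_1 by simp

lemma sep_on_doubleton: "sep (f x) (f y) \<Longrightarrow> {a, b} = {x, y} \<Longrightarrow> sep (f a) (f b)"
  by (auto simp: doubleton_eq_iff intro: sep_commute)

lemma sep_slots:
  "a \<le> k \<Longrightarrow> b \<le> k \<Longrightarrow> a \<noteq> b \<Longrightarrow> sep (int q * int a + s) (int q * int b + s)"
  using circ_sep_slots[OF _ P_eq] q_ge_1 by simp

lemma sep_higher_slot:
  "b < a \<Longrightarrow> a \<le> k \<Longrightarrow> 0 \<le> t \<Longrightarrow> t \<le> 1 \<Longrightarrow> sep (int q * int a + s + t) (int q * int b + s)"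
  using circ_sep_higher_slot[OF _ P_eq] q_ge_1 by simp

lemma sep_slot_k:
  "a < k \<Longrightarrow> sep (int q * int k + s) (int q * int a + s)"
  using sep_higher_slot[of a k 0 s] by simp

lemma block_slot_less: "(j + l - 1) mod k < k"
  using k_ge_2 by simp

lemma sep_vertex_vertex:
  assumes "{a, b} \<in> G_E k n"
  shows "sep (vertex_colour a) (vertex_colour b)"
  using assms
proof (cases rule: G_E_cases)
  case (block i j l)
  have "sep (vertex_colour (Bv i l)) (vertex_colour (Av i j))"
    using sep_slot_k[of "j - 1" "level i"] block by simp
  then show ?thesis by (rule sep_on_doubleton) (use block(1) in \<open>simp add: insert_commute\<close>)
next
  case first
  have "sep (vertex_colour (Av 1 2)) (vertex_colour U)"
    using sep_higher_slot[of 0 1 1 0] k_ge_2 by simp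
  then show ?thesis by (rule sep_on_doubleton) (use first in \<open>simp add: insert_commute\<close>)
next
  case (link i)
  have "sep (vertex_colour (Av (Suc i) 2)) (vertex_colour (Av i 1))"
    using sep_higher_slot[of 0 1 "level (Suc i) - level i" "level i"] k_ge_2 level_step by simp
  then show ?thesis by (rule sep_on_doubleton) (use link(1) in \<open>simp add: insert_commute\<close>)
next
  case last
  have "sep (vertex_colour (Av n 1)) (vertex_colour U)"
    using sep_higher_slot[of 0 2 1 0] k_ge_2 by (simp add: mult.commute)
  then show ?thesis by (rule sep_on_doubleton) (use last in \<open>simp add: insert_commute\<close>)
qed

lemma sep_edge_vertex:
  assumes "e \<in> G_E k n" "v \<in> e"
  shows "sep (edge_colour e) (vertex_colour v)"
  using assms(1)
proof (cases rule: G_E_cases)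
  case (block i j l)
  have "sep (edge_colour e) (vertex_colour (Av i j))"
    using sep_slots[of "(j + l - 1) mod k" "j - 1" "level i"] block block_slot_less
      cyclic_latin_square_distinct[of j k 0 j l] by (simp add: edge_colour_block)
  moreover have "sep (edge_colour e) (vertex_colour (Bv i l))"
    using sep_commute[OF sep_slot_k[of "(j + l - 1) mod k" "level i"]] block_slot_less block
    by (simp add: edge_colour_block)
  ultimately show ?thesis using assms(2) block(1) by auto
next
  case first
  have "sep (edge_colour e) (vertex_colour U)"
    using sep_higher_slot[of 0 k 1 0] k_ge_2 unfolding first edge_colour_first by simp
  moreover have "sep (edge_colour e) (vertex_colour (Av 1 2))"
    using sep_higher_slot[of 1 k 0 1] k_ge_2 unfolding first edge_colour_first by simp
  ultimately show ?thesis using assms(2) first by auto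
next
  case (link i)
  have "sep (edge_colour e) (vertex_colour (Av i 1))"
    using sep_higher_slot[of 0 k "level (Suc i) - level i" "level i"] k_ge_2 level_step
    unfolding link edge_colour_link by simp
  moreover have "sep (edge_colour e) (vertex_colour (Av (Suc i) 2))"
    using sep_slot_k[of 1 "level (Suc i)"] k_ge_2 unfolding link edge_colour_link by simp
  ultimately show ?thesis using assms(2) link(1) by auto
next
  case last
  have "sep (edge_colour e) (vertex_colour (Av n 1))"
    using sep_slot_k[of 0 "level n"] k_ge_2 unfolding last edge_colour_last by simp
  moreover have "sep (edge_colour e) (vertex_colour U)"
  proof -
    have "edge_colour e = int q + 1 * P"
      unfolding last edge_colour_last by (simp add: P_eq algebra_simps)
    then show ?thesis
      using sep_slots[of 1 0 0] k_ge_2 circ_sep_add_period[of P "int q" "int q" 1 0] by simp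
  qed
  ultimately show ?thesis using assms(2) last by auto
qed

lemma sep_edge_block:
  assumes f: "f \<in> G_E k n" and e: "{Av i j, Bv i l} \<in> G_E k n"
    and "f \<noteq> {Av i j, Bv i l}" "v \<in> f" "v \<in> {Av i j, Bv i l}"
  shows "sep (edge_colour f) (edge_colour {Av i j, Bv i l})"
proof -
  have "1 \<le> j \<and> j \<le> k \<and> 1 \<le> l \<and> l < k"
    using e by (cases rule: G_E_cases) (auto simp: doubleton_eq_iff)
  then have jl: "1 \<le> j" "j \<le> k" "1 \<le> l" "l < k" by auto
  have slot_k: "sep (int q * int k + level i) (edge_colour {Av i j, Bv i l})"
    using sep_slot_k[of "(j + l - 1) mod k" "level i"] block_slot_less
    by (simp add: edge_colour_block)
  show ?thesis
    using f
  proof (cases rule: G_E_cases)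
    case (block i' j' l')
    have jl': "1 \<le> j'" "j' \<le> k" "1 \<le> l'" "l' < k" using block by auto
    have same: "i' = i" "j' = j \<or> l' = l" using assms(4,5) block(1) by auto
    have "(j' + l' - 1) mod k \<noteq> (j + l - 1) mod k"
      using cyclic_latin_square_distinct[of j k l j' l'] jl jl' same assms(3) block(1) by auto
    then show ?thesis
      using sep_slots[OF less_imp_le less_imp_le, OF block_slot_less block_slot_less] block(1) same(1)
      by (simp add: edge_colour_block)
  next
    case first
    then have "i = 1" using assms(4,5) by auto
    then show ?thesis using slot_k unfolding first edge_colour_first by simp
  next
    case (link i')
    then consider "i = i'" "j = 1" | "i = Suc i'" "j = 2" using assms(4,5) by auto
    then show ?thesis
    proof cases
      case 1
      then show ?thesis
        using sep_higher_slot[of "l mod k" k "level (Suc i) - level i" "level i"] level_step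
          block_slot_less[of 1 l]
        unfolding link edge_colour_link by (simp add: edge_colour_block)
    next
      case 2
      then show ?thesis using slot_k unfolding link edge_colour_link by simp
    qed
  next
    case last
    then have "i = n" using assms(4,5) by auto
    then show ?thesis using slot_k unfolding last edge_colour_last by simp
  qed
qed

lemma sep_last_first: "sep (edge_colour {Av n 1, U}) (edge_colour {U, Av 1 2})"
proof -
  have "edge_colour {Av n 1, U} = int q + 1 * P"
    unfolding edge_colour_last by (simp add: P_eq algebra_simps)
  moreover have "sep (int q * int k + 1) (int q)"
    using sep_higher_slot[of 1 k 1 0] k_ge_2 by simp
  ultimately show ?thesis unfolding edge_colour_first
    using sep_commute circ_sep_add_period[of P "int q" "int q" 1 "int q * int k + 1"] by simp
qed

lemma sep_edge_edge:
  assumes e: "e \<in> G_E k n" and f: "f \<in> G_E k n" and "e \<noteq> f" "v \<in> e" "v \<in> f"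
  shows "sep (edge_colour e) (edge_colour f)"
proof (cases "\<exists>i j l. f = {Av i j, Bv i l}")
  case True
  then show ?thesis using sep_edge_block[OF e] f assms(3-5) by auto
next
  case f_not_block: False
  show ?thesis
    using e
  proof (cases rule: G_E_cases)
    case (block i j l)
    then show ?thesis using sep_commute[OF sep_edge_block[OF f]] e assms(3-5) by auto
  next
    case first
    show ?thesis
      using f first f_not_block assms(3-5) sep_commute[OF sep_last_first]
      by (cases rule: G_E_cases) auto
  next
    case (link i)
    show ?thesis
      using f link f_not_block assms(3-5) by (cases rule: G_E_cases) auto
  next
    case last
    show ?thesis
      using f last f_not_block assms(3-5) sep_last_first by (cases rule: G_E_cases) auto
  qed
qed

lemma colour_is_pq_total_colouring:
  "pq_total_colouring (G_V k n) (G_E k n) ((k + 1) * q + 1) q colour"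
proof -
  let ?raw = "\<lambda>x. case x of Inl v \<Rightarrow> vertex_colour v | Inr e \<Rightarrow> edge_colour e"
  have P_pos: "0 < P" unfolding P_def of_nat_0_less_iff by simp
  have colour_eq: "int (colour x) = ?raw x mod P" for x
    using P_pos unfolding colour_def by simp
  have sep_raw: "sep (?raw x) (?raw y)"
    if "x \<in> total_elems (G_V k n) (G_E k n)" "y \<in> total_elems (G_V k n) (G_E k n)"
      "total_adj (G_E k n) x y" for x y
  proof (cases x; cases y)
    fix a b assume "x = Inl a" "y = Inl b"
    then show ?thesis using that sep_vertex_vertex by simp
  next
    fix a f assume "x = Inl a" "y = Inr f"
    then show ?thesis using that sep_commute[OF sep_edge_vertex] by (auto simp: total_elems_def)
  next
    fix e b assume "x = Inr e" "y = Inl b"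
    then show ?thesis using that sep_edge_vertex by (auto simp: total_elems_def)
  next
    fix e f assume "x = Inr e" "y = Inr f"
    then show ?thesis using that sep_edge_edge by (auto simp: total_elems_def)
  qed
  show ?thesis
    unfolding pq_total_colouring_def
  proof (intro conjI ballI impI)
    fix x
    show "colour x < (k + 1) * q + 1"
      using colour_eq[of x] pos_mod_bound[OF P_pos, of "?raw x"] unfolding P_def by linarith
  next
    fix x y assume "x \<in> total_elems (G_V k n) (G_E k n)" "y \<in> total_elems (G_V k n) (G_E k n)"
      "total_adj (G_E k n) x y"
    from circ_sep_mod_distance[OF _ sep_raw[OF this]] q_ge_1
    show "int q \<le> \<bar>int (colour x) - int (colour y)\<bar>"
      "\<bar>int (colour x) - int (colour y)\<bar> \<le> int ((k + 1) * q + 1) - int q"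
      unfolding colour_eq P_def by auto
  qed
qed

end

lemma G_circular_total_chromatic_number_bounds:
  assumes "2 \<le> k" "1 \<le> q" "2 * q + 1 \<le> n"
  shows "real (k + 1) \<le> circular_total_chromatic_number (G_V k n) (G_E k n)"
    and "circular_total_chromatic_number (G_V k n) (G_E k n) \<le> real (k + 1) + 1 / real q"
proof -
  interpret G_colouring k q n using assms by unfold_locales
  note colouring = colour_is_pq_total_colouring
  have "q \<le> (k + 1) * q + 1" by simp
  show "real (k + 1) \<le> circular_total_chromatic_number (G_V k n) (G_E k n)"
  proof (rule circular_total_chromatic_number_ge[OF colouring assms(2) \<open>q \<le> _\<close>])
    fix p q' c assume "1 \<le> q'" "pq_total_colouring (G_V k n) (G_E k n) p q' c"
    then have "(k + 1) * q' \<le> p" using G_clique_bound[of k n q' p c] assms by simp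
    then show "real (k + 1) * real q' \<le> real p" by (metis of_nat_le_iff of_nat_mult)
  qed
  have "circular_total_chromatic_number (G_V k n) (G_E k n) \<le> real ((k + 1) * q + 1) / real q"
    using circular_total_chromatic_number_le[OF colouring assms(2) \<open>q \<le> _\<close>] .
  also have "\<dots> = real (k + 1) + 1 / real q"
    using assms(2) by (simp add: field_simps)
  finally show "circular_total_chromatic_number (G_V k n) (G_E k n) \<le> real (k + 1) + 1 / real q" .
qed

theorem corollary5:
  fixes k :: nat
  assumes "k \<ge> 2"
  shows "(\<lambda>n. circular_total_chromatic_number (G_V k n) (G_E k n)) \<longlonglongrightarrow> real (k + 1)"
proof (rule tendsto_sandwich[OF _ _ tendsto_const])
  let ?\<chi> = "\<lambda>n. circular_total_chromatic_number (G_V k n) (G_E k n)"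
  have bounds: "real (k + 1) \<le> ?\<chi> n \<and> ?\<chi> n \<le> real (k + 1) + 4 / real n" if "3 \<le> n" for n
  proof -
    define q where "q = (n - 1) div 2"
    have q: "1 \<le> q" "2 * q + 1 \<le> n" "n \<le> 4 * q" using that unfolding q_def by presburger+
    have "1 / real q \<le> 4 / real n" using q that by (simp add: divide_simps)
    then show ?thesis using G_circular_total_chromatic_number_bounds[OF assms q(1,2)] by linarith
  qed
  show "\<forall>\<^sub>F n in sequentially. real (k + 1) \<le> ?\<chi> n"
    using bounds by (intro eventually_sequentiallyI[of 3]) blast
  show "\<forall>\<^sub>F n in sequentially. ?\<chi> n \<le> real (k + 1) + 4 / real n"
    using bounds by (intro eventually_sequentiallyI[of 3]) blast
  show "(\<lambda>n. real (k + 1) + 4 / real n) \<longlonglongrightarrow> real (k + 1)"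
    using tendsto_add[OF tendsto_const lim_const_over_n, of "real (k + 1)" "4 :: real"] by simp
qed

end
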